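(* Let $\phi:\mathbb{R}^{n\times n}\to\mathbb{R}$ be twice differentiable, $L$-gradient Lipschitz and $(\mu,2r)$-restricted strongly convex, let $M^\star=\arg\min\phi$ satisfy $M^\star\succeq0$ and $r^\star=\operatorname{rank}(M^\star)\le r$, let $f(X)=\phi(XX^T)$ for $X\in\mathbb{R}^{n\times r}$ and let $X^\star$ be a minimizer of $f$. If $f(X)-f(X^\star)\le\frac{\mu}{2(1+L/\mu)}\lambda_{r^\star}^2(M^\star)$, then \[ \lambda_{r^\star}(XX^T)\ge\left(\sqrt{1+L/\mu}-1\right)\|XX^T-M^\star\|_F. \]
   Context: $\phi$ is $L$-gradient Lipschitz if $\|\nabla\phi(M+E)-\nabla\phi(M)\|_F\le L\|E\|_F$ for all $M,E$; $(\mu,k)$-restricted strongly convex if $\langle\nabla^2\phi(M)[E],E\rangle\ge\mu\|E\|_F^2$ for all $M,E\in\mathbb{R}^{n\times n}$ of rank at most $k$. Eigenvalues are ordered decreasingly, $\lambda_1\ge\lambda_2\ge\cdots$. *)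

theory Defs
  imports "HOL-Analysis.Analysis" "HOL-Computational_Algebra.Polynomial"
begin

text \<open>Matrices are elements of real^'n^'n; the inner product on this type is the
Frobenius inner product and norm is the Frobenius norm.\<close>

definition grad :: "(real^'n^'m \<Rightarrow> real) \<Rightarrow> real^'n^'m \<Rightarrow> real^'n^'m" where
  "grad \<phi> M = (SOME G. (\<phi> has_derivative (\<lambda>E. E \<bullet> G)) (at M))"

definition twice_differentiable :: "(real^'n^'m \<Rightarrow> real) \<Rightarrow> bool" where
  "twice_differentiable \<phi> \<longleftrightarrow>
     (\<forall>M. \<phi> differentiable (at M)) \<and> (\<forall>M. grad \<phi> differentiable (at M))"

definition hess :: "(real^'n^'m \<Rightarrow> real) \<Rightarrow> real^'n^'m \<Rightarrow> real^'n^'m \<Rightarrow> real^'n^'m" where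
  "hess \<phi> M E = frechet_derivative (grad \<phi>) (at M) E"

definition gradient_lipschitz :: "real \<Rightarrow> (real^'n^'m \<Rightarrow> real) \<Rightarrow> bool" where
  "gradient_lipschitz L \<phi> \<longleftrightarrow>
     (\<forall>M E. norm (grad \<phi> (M + E) - grad \<phi> M) \<le> L * norm E)"

definition restricted_strongly_convex :: "real \<Rightarrow> nat \<Rightarrow> (real^'n^'m \<Rightarrow> real) \<Rightarrow> bool" where
  "restricted_strongly_convex \<mu> k \<phi> \<longleftrightarrow>
     (\<forall>M E. rank M \<le> k \<and> rank E \<le> k \<longrightarrow> hess \<phi> M E \<bullet> E \<ge> \<mu> * (norm E)\<^sup>2)"

definition psd :: "real^'n^'n \<Rightarrow> bool" where
  "psd M \<longleftrightarrow> transpose M = M \<and> (\<forall>v. v \<bullet> (M *v v) \<ge> 0)"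

definition charpoly :: "real^'n^'n \<Rightarrow> real poly" where
  "charpoly A = det (\<chi> i j. (if i = j then [:0, 1:] else 0) - [:A $ i $ j:])"

text \<open>Eigenvalues counted with multiplicity, ordered decreasingly:
  eigval A k = lambda_k(A) for 1 <= k <= n (1-based).\<close>
definition eigval :: "real^'n^'n \<Rightarrow> nat \<Rightarrow> real" where
  "eigval A k = rev (sorted_list_of_multiset (proots (charpoly A))) ! (k - 1)"

end

theory Submission
  imports Defs
begin

text \<open>Both M* and XX^T have rank at most r, so every matrix on the segment between them has rank
at most 2r and restricted strong convexity applies along it. Since the gradient vanishes at the
minimiser M*, integrating twice gives the quadratic growth
phi(XX^T) - phi(M*) >= mu/2 ||XX^T - M*||_F^2. As M* = YY^T for some n x r matrix Y, we have
f(X*) <= phi(M*), so the hypothesis turns into sqrt(1 + L/mu) ||XX^T - M*||_F <= lambda_{r*}(M*).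
Weyl's inequality lambda_k(A) >= lambda_k(B) - ||A - B||_F, from the Courant-Fischer dimension
count, finishes the argument. The spectral theorem for symmetric matrices identifies the
eigenvalues, defined through the characteristic polynomial, with the diagonal of an orthonormal
eigenbasis, which is what links them to quadratic forms.\<close>

section \<open>Orthonormal eigenbases of symmetric matrices\<close>

locale orthonormal_basis =
  fixes u :: "'n::finite \<Rightarrow> real^'n"
  assumes orthonormal: "\<And>i j. u i \<bullet> u j = (if i = j then 1 else 0)"
begin

lemma inj: "inj u"
  by (rule injI) (metis orthonormal zero_neq_one)

lemma independent: "independent (range u)"
proof -
  have "pairwise orthogonal (range u)"
    unfolding pairwise_def orthogonal_def using orthonormal by auto
  moreover have "0 \<notin> range u" using orthonormal by (metis imageE inner_zero_left zero_neq_one)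
  ultimately show ?thesis by (rule pairwise_orthogonal_independent)
qed

lemma span_UNIV: "span (range u) = UNIV"
proof -
  have "dim (span (range u)) = card (range u)" by (rule dim_span_eq_card_independent[OF independent])
  also have "\<dots> = CARD('n)" using inj by (simp add: card_image)
  finally show ?thesis by (metis dim_eq_full dim_span DIM_cart DIM_real mult.right_neutral)
qed

lemma expansion: "x = (\<Sum>i\<in>UNIV. (u i \<bullet> x) *\<^sub>R u i)"
proof -
  define y where "y = x - (\<Sum>i\<in>UNIV. (u i \<bullet> x) *\<^sub>R u i)"
  have uy: "u j \<bullet> y = 0" for j
    unfolding y_def by (simp add: inner_diff_right inner_sum_right orthonormal if_distrib cong: if_cong)
  have "y \<in> span (range u)" using span_UNIV by simp
  then obtain c where "y = (\<Sum>v\<in>range u. c v *\<^sub>R v)"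
    using span_finite[of "range u"] by auto
  then have "y \<bullet> y = (\<Sum>v\<in>range u. c v * (v \<bullet> y))" by (simp add: inner_sum_left)
  also have "\<dots> = 0" using uy by (auto intro!: sum.neutral)
  finally have "y = 0" by simp
  then show ?thesis unfolding y_def by simp
qed

lemma inner_expansion: "x \<bullet> y = (\<Sum>i\<in>UNIV. (u i \<bullet> x) * (u i \<bullet> y))"
proof -
  have "x \<bullet> y = (\<Sum>i\<in>UNIV. (u i \<bullet> x) *\<^sub>R u i) \<bullet> y" using expansion[of x] by simp
  then show ?thesis by (simp add: inner_sum_left)
qed

lemma inner_self_expansion: "x \<bullet> x = (\<Sum>i\<in>UNIV. (u i \<bullet> x)\<^sup>2)"
  using inner_expansion[of x x] by (simp add: power2_eq_square)

lemma matrix_vector_expansion: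
  fixes A :: "real^'n^'n"
  assumes ev: "\<And>i. A *v u i = d i *\<^sub>R u i"
  shows "A *v x = (\<Sum>i\<in>UNIV. (d i * (u i \<bullet> x)) *\<^sub>R u i)"
proof -
  have "A *v x = A *v (\<Sum>i\<in>UNIV. (u i \<bullet> x) *\<^sub>R u i)" using expansion[of x] by simp
  also have "\<dots> = (\<Sum>i\<in>UNIV. (u i \<bullet> x) *\<^sub>R (A *v u i))"
    by (simp add: vec.sum matrix_vector_mult_scaleR)
  also have "\<dots> = (\<Sum>i\<in>UNIV. (d i * (u i \<bullet> x)) *\<^sub>R u i)" by (simp add: ev mult.commute)
  finally show ?thesis .
qed

lemma quadratic_form_expansion:
  fixes A :: "real^'n^'n"
  assumes ev: "\<And>i. A *v u i = d i *\<^sub>R u i"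
  shows "x \<bullet> (A *v x) = (\<Sum>i\<in>UNIV. d i * (u i \<bullet> x)\<^sup>2)"
  unfolding matrix_vector_expansion[OF ev]
  by (simp add: inner_sum_right power2_eq_square inner_commute mult.assoc)

lemma inner_span_image_other:
  assumes "z \<in> span (u ` I)" "i \<notin> I"
  shows "u i \<bullet> z = 0"
proof -
  obtain c where "z = (\<Sum>v\<in>u ` I. c v *\<^sub>R v)"
    using assms(1) span_finite[of "u ` I"] by auto
  then have "u i \<bullet> z = (\<Sum>v\<in>u ` I. c v * (u i \<bullet> v))" by (simp add: inner_sum_right)
  also have "\<dots> = 0" using assms(2) orthonormal by (auto intro!: sum.neutral)
  finally show ?thesis .
qed

lemma dim_span_image: "dim (span (u ` I)) = card I"
proof -
  have "independent (u ` I)" by (rule independent_mono[OF independent]) auto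
  then have "dim (span (u ` I)) = card (u ` I)" by (rule dim_span_eq_card_independent)
  also have "\<dots> = card I" by (rule card_image[OF inj_on_subset[OF inj subset_UNIV]])
  finally show ?thesis .
qed

lemma quadratic_form_ge:
  fixes A :: "real^'n^'n"
  assumes ev: "\<And>i. A *v u i = d i *\<^sub>R u i"
    and z: "z \<in> span (u ` I)" and I: "\<And>i. i \<in> I \<Longrightarrow> t \<le> d i"
  shows "t * (z \<bullet> z) \<le> z \<bullet> (A *v z)"
proof -
  have "t * (z \<bullet> z) = (\<Sum>i\<in>UNIV. t * (u i \<bullet> z)\<^sup>2)"
    by (simp add: inner_self_expansion[of z] sum_distrib_left)
  also have "\<dots> \<le> (\<Sum>i\<in>UNIV. d i * (u i \<bullet> z)\<^sup>2)"
    using I inner_span_image_other[OF z] by (intro sum_mono) (fastforce intro: mult_right_mono)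
  also have "\<dots> = z \<bullet> (A *v z)" by (simp add: quadratic_form_expansion[OF ev])
  finally show ?thesis .
qed

lemma quadratic_form_le:
  fixes A :: "real^'n^'n"
  assumes ev: "\<And>i. A *v u i = d i *\<^sub>R u i"
    and z: "z \<in> span (u ` I)" and I: "\<And>i. i \<in> I \<Longrightarrow> d i \<le> t"
  shows "z \<bullet> (A *v z) \<le> t * (z \<bullet> z)"
proof -
  have "z \<bullet> (A *v z) = (\<Sum>i\<in>UNIV. d i * (u i \<bullet> z)\<^sup>2)" by (simp add: quadratic_form_expansion[OF ev])
  also have "\<dots> \<le> (\<Sum>i\<in>UNIV. t * (u i \<bullet> z)\<^sup>2)"
    using I inner_span_image_other[OF z] by (intro sum_mono) (fastforce intro: mult_right_mono)
  also have "\<dots> = t * (z \<bullet> z)" by (simp add: inner_self_expansion[of z] sum_distrib_left)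
  finally show ?thesis .
qed

lemma psd_eigenvalue_nonneg:
  fixes A :: "real^'n^'n"
  assumes "psd A" and "\<And>i. A *v u i = d i *\<^sub>R u i"
  shows "0 \<le> d i"
proof -
  have "0 \<le> u i \<bullet> (A *v u i)" using assms(1) psd_def by blast
  also have "\<dots> = d i" using assms(2) orthonormal[of i i] by simp
  finally show ?thesis .
qed

lemma card_nonzero_eigenvalues_le_rank:
  fixes A :: "real^'n^'n"
  assumes ev: "\<And>i. A *v u i = d i *\<^sub>R u i"
  shows "card {i. d i \<noteq> 0} \<le> rank A"
proof -
  have "u ` {i. d i \<noteq> 0} \<subseteq> range (\<lambda>x. A *v x)"
  proof
    fix y assume "y \<in> u ` {i. d i \<noteq> 0}"
    then obtain i where "d i \<noteq> 0" "y = u i" by blast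
    then have "y = A *v ((1 / d i) *\<^sub>R u i)" using ev[of i] by (simp add: matrix_vector_mult_scaleR)
    then show "y \<in> range (\<lambda>x. A *v x)" by blast
  qed
  then have "dim (span (u ` {i. d i \<noteq> 0})) \<le> rank A"
    unfolding rank_dim_range by (metis dim_span dim_subset)
  then show ?thesis using dim_span_image[of "{i. d i \<noteq> 0}"] by linarith
qed

end

lemma symmetric_matrix_inner_commute:
  fixes A :: "real^'n^'n"
  assumes "transpose A = A"
  shows "x \<bullet> (A *v y) = (A *v x) \<bullet> y"
  by (metis assms dot_lmul_matrix transpose_matrix_vector)

lemma quadratic_nonpos_imp_linear_coeff_zero:
  fixes a b :: real
  assumes "\<And>t. 2 * t * a + t\<^sup>2 * b \<le> 0"
  shows "a = 0"
proof (rule ccontr)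
  assume a: "a \<noteq> 0"
  define c where "c = \<bar>b\<bar> + 1"
  have pos: "c > 0" unfolding c_def by simp
  have "2 * (a / c) * a + (a / c)\<^sup>2 * b = a\<^sup>2 * (2 * c + b) / c^2"
    using pos by (simp add: field_simps power2_eq_square)
  also have "\<dots> > 0"
    using a pos unfolding c_def by (intro divide_pos_pos mult_pos_pos) (auto simp: abs_if)
  finally show False using assms[of "a / c"] by simp
qed

text \<open>First-order optimality of the Rayleigh quotient along v + t w, for every w in S.\<close>

lemma rayleigh_maximizer_eigenvector:
  fixes A :: "real^'n^'n"
  assumes sym: "transpose A = A" and S: "subspace S" and inv: "\<forall>x\<in>S. A *v x \<in> S"
    and v: "v \<in> S" "norm v = 1"
    and max: "\<forall>y\<in>S. norm y = 1 \<longrightarrow> y \<bullet> (A *v y) \<le> v \<bullet> (A *v v)"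
  shows "A *v v = (v \<bullet> (A *v v)) *\<^sub>R v"
proof -
  define l where "l = v \<bullet> (A *v v)"
  have vv: "v \<bullet> v = 1" using v(2) by (simp add: norm_eq_1)
  have key: "((A *v v) - l *\<^sub>R v) \<bullet> w = 0" if w: "w \<in> S" for w
  proof (rule quadratic_nonpos_imp_linear_coeff_zero)
    fix t
    let ?z = "v + t *\<^sub>R w"
    have ineq: "?z \<bullet> (A *v ?z) \<le> l * (?z \<bullet> ?z)"
    proof (cases "?z = 0")
      case False
      define y where "y = (1 / norm ?z) *\<^sub>R ?z"
      have "y \<in> S" "norm y = 1" using S v w False unfolding y_def
        by (simp_all add: subspace_add subspace_scale)
      then have "y \<bullet> (A *v y) \<le> l" using max l_def by blast
      moreover have "y \<bullet> (A *v y) = (?z \<bullet> (A *v ?z)) / (norm ?z)\<^sup>2"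
        unfolding y_def
        by (simp add: matrix_vector_mult_scaleR inner_scaleR_left inner_scaleR_right power2_eq_square)
      ultimately show ?thesis using False by (simp add: divide_le_eq power2_norm_eq_inner)
    qed simp
    have "v \<bullet> (A *v w) = (A *v v) \<bullet> w" using symmetric_matrix_inner_commute[OF sym] .
    then have "?z \<bullet> (A *v ?z) = l + 2 * t * ((A *v v) \<bullet> w) + t\<^sup>2 * (w \<bullet> (A *v w))"
      unfolding l_def
      by (simp add: matrix_vector_right_distrib matrix_vector_mult_scaleR inner_add_left
          inner_add_right inner_commute[of w "A *v v"] power2_eq_square algebra_simps)
    moreover have "?z \<bullet> ?z = 1 + 2 * t * (v \<bullet> w) + t\<^sup>2 * (w \<bullet> w)"
      using vv by (simp add: inner_add_left inner_add_right inner_commute[of w v] power2_eq_square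
          algebra_simps)
    ultimately show "2 * t * (((A *v v) - l *\<^sub>R v) \<bullet> w) + t\<^sup>2 * (w \<bullet> (A *v w) - l * (w \<bullet> w)) \<le> 0"
      using ineq by (simp add: inner_diff_left algebra_simps)
  qed
  have "(A *v v) - l *\<^sub>R v \<in> S" using S inv v by (simp add: subspace_diff subspace_scale)
  from key[OF this] show ?thesis unfolding l_def by simp
qed

lemma invariant_subspace_unit_eigenvector:
  fixes A :: "real^'n^'n"
  assumes sym: "transpose A = A" and S: "subspace S" and inv: "\<forall>x\<in>S. A *v x \<in> S"
    and nontrivial: "S \<noteq> {0}"
  obtains v where "v \<in> S" "norm v = 1" "A *v v = (v \<bullet> (A *v v)) *\<^sub>R v"
proof -
  obtain x where x: "x \<in> S" "x \<noteq> 0" using nontrivial subspace_0[OF S] by blast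
  define K where "K = S \<inter> sphere 0 1"
  have "compact K" unfolding K_def by (simp add: S closed_Int_compact closed_subspace)
  moreover have "(1 / norm x) *\<^sub>R x \<in> K" unfolding K_def using x S by (simp add: subspace_scale)
  then have "K \<noteq> {}" by blast
  moreover have "continuous_on K (\<lambda>y. y \<bullet> (A *v y))"
    by (intro continuous_intros linear_continuous_on matrix_vector_mul_linear)
  ultimately obtain v where "v \<in> K" and max: "\<forall>y\<in>K. y \<bullet> (A *v y) \<le> v \<bullet> (A *v v)"
    using continuous_attains_sup by blast
  then have v: "v \<in> S" "norm v = 1" unfolding K_def by auto
  moreover have "A *v v = (v \<bullet> (A *v v)) *\<^sub>R v"
    by (rule rayleigh_maximizer_eigenvector[OF sym S inv v]) (use max in \<open>auto simp: K_def\<close>)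
  ultimately show thesis by (rule that)
qed

lemma invariant_orthogonal_complement_eigenvector:
  fixes A :: "real^'n^'n"
  assumes sym: "transpose A = A" and inv: "\<forall>x\<in>S. A *v x \<in> S" and ev: "A *v v = l *\<^sub>R v"
  shows "\<forall>y\<in>{y\<in>S. v \<bullet> y = 0}. A *v y \<in> {y\<in>S. v \<bullet> y = 0}"
proof
  fix y assume y: "y \<in> {y\<in>S. v \<bullet> y = 0}"
  have "v \<bullet> (A *v y) = (A *v v) \<bullet> y" by (rule symmetric_matrix_inner_commute[OF sym])
  then show "A *v y \<in> {y\<in>S. v \<bullet> y = 0}" using y inv ev by auto
qed

lemma invariant_subspace_orthonormal_eigenbasis:
  fixes A :: "real^'n^'n"
  assumes sym: "transpose A = A"
  shows "subspace S \<Longrightarrow> (\<forall>x\<in>S. A *v x \<in> S) \<Longrightarrow> \<exists>B. B \<subseteq> S \<and> pairwise orthogonal B \<and>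
     (\<forall>v\<in>B. norm v = 1 \<and> A *v v = (v \<bullet> (A *v v)) *\<^sub>R v) \<and> span B = S"
proof (induction "dim S" arbitrary: S rule: less_induct)
  case less
  note S = less.prems(1) and inv = less.prems(2)
  show ?case
  proof (cases "S = {0}")
    case True
    then show ?thesis by (intro exI[of _ "{}"]) auto
  next
    case False
    then obtain v where v: "v \<in> S" "norm v = 1" and ev: "A *v v = (v \<bullet> (A *v v)) *\<^sub>R v"
      using invariant_subspace_unit_eigenvector[OF sym S inv] by blast
    have vv: "v \<bullet> v = 1" using v(2) by (simp add: norm_eq_1)
    define S' where "S' = {y\<in>S. v \<bullet> y = 0}"
    have S': "subspace S'" using S unfolding S'_def subspace_def by (auto simp: inner_add_right)
    have inv': "\<forall>y\<in>S'. A *v y \<in> S'"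
      unfolding S'_def by (rule invariant_orthogonal_complement_eigenvector[OF sym inv ev])
    have "v \<notin> S'" using vv unfolding S'_def by simp
    then have "S' \<subset> S" using v unfolding S'_def by blast
    then have "dim S' < dim S" by (metis dim_psubset span_eq_iff S S')
    then obtain B' where B': "B' \<subseteq> S'" "pairwise orthogonal B'"
      "\<forall>v\<in>B'. norm v = 1 \<and> A *v v = (v \<bullet> (A *v v)) *\<^sub>R v" "span B' = S'"
      using less.hyps S' inv' by blast
    have "S \<subseteq> span (insert v B')"
    proof
      fix y assume "y \<in> S"
      then have "y - (v \<bullet> y) *\<^sub>R v \<in> span B'"
        using v S vv B'(4) unfolding S'_def by (auto simp: subspace_diff subspace_scale inner_diff_right)
      then show "y \<in> span (insert v B')" by (auto simp: span_breakdown_eq)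
    qed
    moreover have "span (insert v B') \<subseteq> S"
      using v B'(1) S unfolding S'_def by (intro span_minimal) auto
    moreover have "pairwise orthogonal (insert v B')"
      using B'(1,2) unfolding S'_def by (auto simp: pairwise_insert orthogonal_def inner_commute)
    ultimately show ?thesis
      using v ev B' unfolding S'_def by (intro exI[of _ "insert v B'"]) auto
  qed
qed

lemma symmetric_orthonormal_eigenbasis:
  fixes A :: "real^'n^'n"
  assumes sym: "transpose A = A"
  obtains u :: "'n \<Rightarrow> real^'n" and d :: "'n \<Rightarrow> real"
  where "orthonormal_basis u" "\<And>i. A *v u i = d i *\<^sub>R u i"
proof -
  obtain B where B: "pairwise orthogonal B"
     "\<forall>v\<in>B. norm v = 1 \<and> A *v v = (v \<bullet> (A *v v)) *\<^sub>R v" "span B = UNIV"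
    using invariant_subspace_orthonormal_eigenbasis[OF sym, of UNIV] by auto
  have "0 \<notin> B" using B(2) by fastforce
  then have ind: "independent B" using B(1) pairwise_orthogonal_independent by blast
  then have "card B = dim (span B)" by (rule dim_span_eq_card_independent[symmetric])
  also have "\<dots> = CARD('n)" using B(3) by (simp add: dim_UNIV)
  finally obtain e where e: "bij_betw e (UNIV :: 'n set) B"
    using finite_same_card_bij[OF finite independent_imp_finite[OF ind]] by metis
  have eB: "e i \<in> B" for i using e bij_betwE by blast
  have on: "e i \<bullet> e j = (if i = j then 1 else 0)" for i j
  proof (cases "i = j")
    case True
    then show ?thesis using B(2) eB[of i] by (simp add: dot_square_norm)
  next
    case False
    then have "e i \<noteq> e j" using e by (metis bij_betw_inv_into_left UNIV_I)
    then show ?thesis using False B(1) eB[of i] eB[of j] unfolding pairwise_def orthogonal_def by auto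
  qed
  show ?thesis
  proof (rule that)
    show "orthonormal_basis e" using on by unfold_locales
    show "A *v e i = (e i \<bullet> (A *v e i)) *\<^sub>R e i" for i using B(2) eB by blast
  qed
qed

section \<open>Eigenvalues through the characteristic polynomial\<close>

definition values_desc :: "('n::finite \<Rightarrow> real) \<Rightarrow> real list" where
  "values_desc d = rev (sorted_list_of_multiset (image_mset d (mset_set UNIV)))"

lemma mset_values_desc: "mset (values_desc d) = image_mset d (mset_set UNIV)"
  by (simp add: values_desc_def)

lemma length_values_desc [simp]: "length (values_desc (d :: 'n::finite \<Rightarrow> real)) = CARD('n)"
  using arg_cong[OF mset_values_desc[of d], of size] by simp

lemma values_desc_antimono:
  fixes d :: "'n::finite \<Rightarrow> real"
  assumes "i \<le> j" "j < CARD('n)"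
  shows "values_desc d ! j \<le> values_desc d ! i"
proof -
  let ?s = "sorted_list_of_multiset (image_mset d (mset_set UNIV))"
  have "length ?s = CARD('n)" using length_values_desc[of d] by (simp add: values_desc_def)
  then show ?thesis
    using assms by (simp add: values_desc_def rev_nth sorted_nth_mono)
qed

lemma card_values_desc_filter:
  fixes d :: "'n::finite \<Rightarrow> real"
  shows "card {i. P (d i)} = card {k. k < CARD('n) \<and> P (values_desc d ! k)}"
proof -
  let ?xs = "values_desc d"
  have "card {k. k < CARD('n) \<and> P (?xs ! k)} = length (filter P ?xs)"
    by (simp add: length_filter_conv_card)
  also have "\<dots> = size (filter_mset P (mset ?xs))" by (metis mset_filter size_mset)
  also have "\<dots> = size (filter_mset (\<lambda>i. P (d i)) (mset_set (UNIV :: 'n set)))"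
    by (simp add: mset_values_desc filter_mset_image_mset)
  also have "\<dots> = card {i. P (d i)}" by (simp add: filter_mset_mset_set)
  finally show ?thesis by simp
qed

lemma card_values_desc_ge:
  fixes d :: "'n::finite \<Rightarrow> real"
  assumes "j < CARD('n)"
  shows "j + 1 \<le> card {i. values_desc d ! j \<le> d i}"
proof -
  have "card {..j} \<le> card {k. k < CARD('n) \<and> values_desc d ! j \<le> values_desc d ! k}"
    by (rule card_mono) (use assms values_desc_antimono in auto)
  then show ?thesis using card_values_desc_filter[of "\<lambda>y. values_desc d ! j \<le> y" d] by simp
qed

lemma card_values_desc_le:
  fixes d :: "'n::finite \<Rightarrow> real"
  assumes "j < CARD('n)"
  shows "CARD('n) - j \<le> card {i. d i \<le> values_desc d ! j}"
proof -
  have "card {j..<CARD('n)} \<le> card {k. k < CARD('n) \<and> values_desc d ! k \<le> values_desc d ! j}"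
    by (rule card_mono) (use assms values_desc_antimono in auto)
  then show ?thesis using card_values_desc_filter[of "\<lambda>y. y \<le> values_desc d ! j" d] by simp
qed

lemma values_desc_nth_in_range:
  fixes d :: "'n::finite \<Rightarrow> real"
  assumes "j < CARD('n)"
  shows "values_desc d ! j \<in> range d"
proof -
  have "values_desc d ! j \<in># mset (values_desc d)" using assms by simp
  then show ?thesis unfolding mset_values_desc by auto
qed

lemma poly_charpoly:
  fixes A :: "real^'n^'n"
  shows "poly (charpoly A) x = det (\<chi> i j. (if i = j then x else 0) - A $ i $ j)"
proof -
  have "poly ((if b then [:0, 1:] else 0) - [:a:]) x = (if b then x else 0) - a" for b and a :: real
    by auto
  then show ?thesis
    unfolding charpoly_def det_def by (simp add: poly_sum poly_prod del: poly_diff)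
qed

context orthonormal_basis
begin

text \<open>The matrix Q with columns u i is orthogonal and (xI - A) Q = Q diag(x - d i).\<close>

lemma det_shift_eigen:
  fixes A :: "real^'n^'n"
  assumes ev: "\<And>i. A *v u i = d i *\<^sub>R u i"
  shows "det (\<chi> i j. (if i = j then x else 0) - A $ i $ j) = (\<Prod>i\<in>UNIV. x - d i)"
proof -
  define N where "N = (\<chi> i j. (if i = j then x else 0) - A $ i $ j)"
  define Q where "Q = (\<chi> a i. u i $ a :: real^'n^'n)"
  define D where "D = (\<chi> i j. if i = j then x - d i else 0 :: real^'n^'n)"
  have "N = x *\<^sub>R mat 1 - A" unfolding N_def by (simp add: vec_eq_iff mat_def)
  then have "N *v u i = x *\<^sub>R u i - A *v u i" for i
    by (metis matrix_vector_mult_diff_rdistrib matrix_vector_mul_lid scaleR_matrix_vector_assoc)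
  then have Nu: "N *v u i = (x - d i) *\<^sub>R u i" for i by (simp add: ev algebra_simps)
  have "N ** Q = Q ** D"
  proof -
    have "(N ** Q) $ a $ i = (N *v u i) $ a" for a i
      unfolding Q_def by (simp add: matrix_matrix_mult_def matrix_vector_mult_def)
    moreover have "(Q ** D) $ a $ i = (x - d i) * u i $ a" for a i
      unfolding Q_def D_def by (simp add: matrix_matrix_mult_def if_distrib cong: if_cong)
    ultimately show ?thesis using Nu by (simp add: vec_eq_iff mult.commute)
  qed
  then have "det N * det Q = det Q * det D" by (metis det_mul)
  moreover have "transpose Q ** Q = mat 1"
    unfolding Q_def
    by (simp add: vec_eq_iff matrix_matrix_mult_def transpose_def mat_def orthonormal[symmetric]
        inner_vec_def)
  then have "det Q * det Q = 1" by (metis det_I det_mul det_transpose)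
  ultimately have "det N = det D" by auto
  also have "det D = (\<Prod>i\<in>UNIV. x - d i)" unfolding D_def by (subst det_diagonal) auto
  finally show ?thesis unfolding N_def .
qed

lemma charpoly_eigen:
  fixes A :: "real^'n^'n"
  assumes "\<And>i. A *v u i = d i *\<^sub>R u i"
  shows "charpoly A = (\<Prod>i\<in>UNIV. [:- d i, 1:])"
proof -
  have "poly (charpoly A) = poly (\<Prod>i\<in>UNIV. [:- d i, 1:])"
    by (rule ext) (simp add: poly_charpoly det_shift_eigen[OF assms] poly_prod)
  then show ?thesis by (simp add: poly_eq_poly_eq_iff)
qed

lemma eigval_eigen:
  fixes A :: "real^'n^'n"
  assumes "\<And>i. A *v u i = d i *\<^sub>R u i"
  shows "eigval A k = values_desc d ! (k - 1)"
proof -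
  have singletons: "(\<Sum>i\<in>I. {#d i#}) = image_mset d (mset_set I)" if "finite I" for I
    using that by (induction I rule: finite_induct) auto
  have "proots (charpoly A) = (\<Sum>i\<in>UNIV. proots [:- d i, 1:])"
    unfolding charpoly_eigen[OF assms] by (rule proots_prod) auto
  also have "\<dots> = image_mset d (mset_set UNIV)" by (simp add: proots_linear_factor singletons)
  finally show ?thesis unfolding eigval_def values_desc_def by simp
qed

end

section \<open>Weyl's inequality\<close>

lemma norm_matrix_vector_le:
  fixes E :: "real^'n^'m"
  shows "norm (E *v z) \<le> norm E * norm z"
proof -
  have "(E *v z) \<bullet> (E *v z) = (\<Sum>i\<in>UNIV. (E $ i \<bullet> z)\<^sup>2)"
    by (simp add: inner_vec_def matrix_vector_mult_def power2_eq_square)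
  also have "\<dots> \<le> (\<Sum>i\<in>UNIV. (E $ i \<bullet> E $ i) * (z \<bullet> z))"
  proof (rule sum_mono)
    fix i
    have "\<bar>E $ i \<bullet> z\<bar> \<le> norm (E $ i) * norm z" by (rule Cauchy_Schwarz_ineq2)
    then have "(E $ i \<bullet> z)\<^sup>2 \<le> (norm (E $ i) * norm z)\<^sup>2"
      by (metis abs_ge_zero power2_abs power_mono)
    then show "(E $ i \<bullet> z)\<^sup>2 \<le> (E $ i \<bullet> E $ i) * (z \<bullet> z)"
      by (simp add: power_mult_distrib dot_square_norm)
  qed
  also have "\<dots> = (E \<bullet> E) * (z \<bullet> z)" by (simp add: inner_vec_def sum_distrib_right)
  finally have "(norm (E *v z))\<^sup>2 \<le> (norm E * norm z)\<^sup>2"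
    by (simp add: power_mult_distrib dot_square_norm)
  then show ?thesis by (rule power2_le_imp_le) simp
qed

lemma abs_quadratic_form_le:
  fixes E :: "real^'n^'n"
  shows "\<bar>z \<bullet> (E *v z)\<bar> \<le> norm E * (z \<bullet> z)"
proof -
  have "\<bar>z \<bullet> (E *v z)\<bar> \<le> norm z * norm (E *v z)" by (rule Cauchy_Schwarz_ineq2)
  also have "\<dots> \<le> norm z * (norm E * norm z)" by (simp add: mult_left_mono norm_matrix_vector_le)
  also have "\<dots> = norm E * (z \<bullet> z)" by (simp add: power2_eq_square flip: power2_norm_eq_inner)
  finally show ?thesis .
qed

lemma subspaces_Int_nonzero:
  fixes V W :: "'a::euclidean_space set"
  assumes "subspace V" "subspace W" and "DIM('a) < dim V + dim W"
  obtains z where "z \<in> V" "z \<in> W" "z \<noteq> 0"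
proof -
  have "dim {x + y |x y. x \<in> V \<and> y \<in> W} + dim (V \<inter> W) = dim V + dim W"
    by (rule dim_sums_Int[OF assms(1,2)])
  moreover have "dim {x + y |x y. x \<in> V \<and> y \<in> W} \<le> DIM('a)" by (rule dim_subset_UNIV)
  ultimately have "dim (V \<inter> W) \<noteq> 0" using assms(3) by linarith
  then have "\<not> V \<inter> W \<subseteq> {0}" by (simp add: dim_eq_0)
  then show thesis using that by blast
qed

text \<open>A nonzero z in the span of the eigenvectors of B for its j+1 largest eigenvalues and of
those of A for its n-j smallest ones exists by counting dimensions; comparing the quadratic forms
of A and B at z gives the bound.\<close>

lemma values_desc_weyl:
  fixes A B :: "real^'n^'n"
  assumes "orthonormal_basis u" and evA: "\<And>i. A *v u i = a i *\<^sub>R u i"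
    and "orthonormal_basis w" and evB: "\<And>i. B *v w i = b i *\<^sub>R w i"
    and j: "j < CARD('n)"
  shows "values_desc b ! j - norm (A - B) \<le> values_desc a ! j"
proof -
  interpret U: orthonormal_basis u by fact
  interpret W: orthonormal_basis w by fact
  define I where "I = {i. values_desc b ! j \<le> b i}"
  define J where "J = {i. a i \<le> values_desc a ! j}"
  have "DIM(real^'n) < dim (span (w ` I)) + dim (span (u ` J))"
    using card_values_desc_ge[OF j, of b] card_values_desc_le[OF j, of a] j
    unfolding W.dim_span_image U.dim_span_image I_def J_def by simp
  then obtain z where zI: "z \<in> span (w ` I)" and zJ: "z \<in> span (u ` J)" and "z \<noteq> 0"
    by (rule subspaces_Int_nonzero[OF subspace_span subspace_span])
  have "values_desc b ! j * (z \<bullet> z) \<le> z \<bullet> (B *v z)"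
    by (rule W.quadratic_form_ge[OF evB zI]) (simp add: I_def)
  moreover have "z \<bullet> (A *v z) \<le> values_desc a ! j * (z \<bullet> z)"
    by (rule U.quadratic_form_le[OF evA zJ]) (simp add: J_def)
  moreover have "z \<bullet> (A *v z) = z \<bullet> (B *v z) + z \<bullet> ((A - B) *v z)"
    by (simp add: matrix_vector_mult_diff_rdistrib inner_diff_right)
  moreover have "- (norm (A - B) * (z \<bullet> z)) \<le> z \<bullet> ((A - B) *v z)"
    using abs_quadratic_form_le[of z "A - B"] by (simp add: abs_le_iff)
  ultimately have "(values_desc b ! j - norm (A - B)) * (z \<bullet> z) \<le> values_desc a ! j * (z \<bullet> z)"
    unfolding left_diff_distrib by linarith
  moreover have "z \<bullet> z > 0" using \<open>z \<noteq> 0\<close> by simp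
  ultimately show ?thesis by simp
qed

text \<open>For k = 0 both sides read the largest eigenvalue, because 0 - 1 = 0 in nat.\<close>

lemma eigval_weyl:
  fixes A B :: "real^'n^'n"
  assumes "transpose A = A" "transpose B = B" and "k \<le> CARD('n)"
  shows "eigval B k - norm (A - B) \<le> eigval A k"
proof -
  obtain u a where u: "orthonormal_basis u" and evA: "\<And>i. A *v u i = a i *\<^sub>R u i"
    using symmetric_orthonormal_eigenbasis[OF assms(1)] by blast
  obtain w b where w: "orthonormal_basis w" and evB: "\<And>i. B *v w i = b i *\<^sub>R w i"
    using symmetric_orthonormal_eigenbasis[OF assms(2)] by blast
  have "k - 1 < CARD('n)" using assms(3) zero_less_card_finite[where 'a='n] by linarith
  then show ?thesis
    unfolding orthonormal_basis.eigval_eigen[OF u evA] orthonormal_basis.eigval_eigen[OF w evB]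
    by (rule values_desc_weyl[OF u evA w evB])
qed

lemma eigval_psd_nonneg:
  fixes M :: "real^'n^'n"
  assumes "psd M" and "k \<le> CARD('n)"
  shows "0 \<le> eigval M k"
proof -
  obtain u d where u: "orthonormal_basis u" and ev: "\<And>i. M *v u i = d i *\<^sub>R u i"
    using symmetric_orthonormal_eigenbasis assms(1) psd_def by metis
  have "k - 1 < CARD('n)" using assms(2) zero_less_card_finite[where 'a='n] by linarith
  then obtain i where "eigval M k = d i"
    using values_desc_nth_in_range unfolding orthonormal_basis.eigval_eigen[OF u ev] by blast
  then show ?thesis using orthonormal_basis.psd_eigenvalue_nonneg[OF u assms(1) ev] by simp
qed

section \<open>Quadratic growth under restricted strong convexity\<close>

lemma gradient_lipschitz_nonneg:
  fixes \<phi> :: "real^'n^'m \<Rightarrow> real"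
  assumes "gradient_lipschitz L \<phi>"
  shows "0 \<le> L"
proof -
  let ?E = "(\<chi> i j. 1) :: real^'n^'m"
  have "?E \<noteq> 0" by (metis vec_lambda_beta zero_index zero_neq_one)
  then have "0 < norm ?E" by simp
  moreover have "0 \<le> L * norm ?E"
    using assms unfolding gradient_lipschitz_def by (metis norm_ge_zero order_trans)
  ultimately show ?thesis by (simp add: zero_le_mult_iff)
qed

lemma has_derivative_grad:
  fixes \<phi> :: "real^'n^'m \<Rightarrow> real"
  assumes "\<phi> differentiable (at M)"
  shows "(\<phi> has_derivative (\<lambda>E. E \<bullet> grad \<phi> M)) (at M)"
proof -
  obtain D where D: "(\<phi> has_derivative D) (at M)" using assms differentiable_def by blast
  have lin: "linear D" using D has_derivative_linear by blast
  define G where "G = (\<Sum>b\<in>Basis. D b *\<^sub>R b)"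
  have "E \<bullet> G = D E" for E
  proof -
    have "E \<bullet> G = (\<Sum>b\<in>Basis. (E \<bullet> b) * D b)" unfolding G_def by (simp add: inner_sum_right mult.commute)
    also have "\<dots> = D (\<Sum>b\<in>Basis. (E \<bullet> b) *\<^sub>R b)"
      by (simp add: linear_sum[OF lin] linear_cmul[OF lin])
    also have "\<dots> = D E" by (simp add: euclidean_representation)
    finally show ?thesis .
  qed
  then have "(\<phi> has_derivative (\<lambda>E. E \<bullet> G)) (at M)" using D by (simp add: fun_eq_iff[symmetric])
  then have "\<exists>G. (\<phi> has_derivative (\<lambda>E. E \<bullet> G)) (at M)" by blast
  then show ?thesis unfolding grad_def by (rule someI_ex)
qed

lemma has_real_derivative_along_line:
  fixes \<phi> :: "real^'n^'m \<Rightarrow> real"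
  assumes "\<phi> differentiable (at (M + t *\<^sub>R E))"
  shows "((\<lambda>t. \<phi> (M + t *\<^sub>R E)) has_real_derivative (E \<bullet> grad \<phi> (M + t *\<^sub>R E))) (at t)"
proof -
  have "((\<lambda>t. M + t *\<^sub>R E) has_derivative (\<lambda>h. h *\<^sub>R E)) (at t)"
    by (auto intro!: derivative_eq_intros)
  from has_derivative_compose[OF this has_derivative_grad[OF assms]]
  have "((\<lambda>t. \<phi> (M + t *\<^sub>R E)) has_derivative (\<lambda>h. (h *\<^sub>R E) \<bullet> grad \<phi> (M + t *\<^sub>R E))) (at t)"
    by (simp add: o_def)
  moreover have "(\<lambda>h. (h *\<^sub>R E) \<bullet> grad \<phi> (M + t *\<^sub>R E)) = (*) (E \<bullet> grad \<phi> (M + t *\<^sub>R E))"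
    by (rule ext) simp
  ultimately show ?thesis unfolding has_field_derivative_def by simp
qed

lemma has_real_derivative_grad_along_line:
  fixes \<phi> :: "real^'n^'m \<Rightarrow> real"
  assumes "grad \<phi> differentiable (at (M + t *\<^sub>R E))"
  shows "((\<lambda>t. E \<bullet> grad \<phi> (M + t *\<^sub>R E)) has_real_derivative (hess \<phi> (M + t *\<^sub>R E) E \<bullet> E)) (at t)"
proof -
  let ?H = "frechet_derivative (grad \<phi>) (at (M + t *\<^sub>R E))"
  have H: "(grad \<phi> has_derivative ?H) (at (M + t *\<^sub>R E))"
    using assms frechet_derivative_works by blast
  have lin: "linear ?H" using H has_derivative_linear by blast
  have "((\<lambda>t. M + t *\<^sub>R E) has_derivative (\<lambda>h. h *\<^sub>R E)) (at t)"
    by (auto intro!: derivative_eq_intros)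
  from has_derivative_compose[OF this H]
  have "((\<lambda>t. grad \<phi> (M + t *\<^sub>R E)) has_derivative (\<lambda>h. ?H (h *\<^sub>R E))) (at t)"
    by (simp add: o_def)
  then have "((\<lambda>t. E \<bullet> grad \<phi> (M + t *\<^sub>R E)) has_derivative (\<lambda>h. E \<bullet> ?H (h *\<^sub>R E))) (at t)"
    by (rule has_derivative_inner_right)
  moreover have "(\<lambda>h. E \<bullet> ?H (h *\<^sub>R E)) = (*) (hess \<phi> (M + t *\<^sub>R E) E \<bullet> E)"
    by (rule ext) (simp add: linear_cmul[OF lin] hess_def inner_commute mult.commute)
  ultimately show ?thesis unfolding has_field_derivative_def by simp
qed

text \<open>g t - c t^2 / 2 has a nondecreasing derivative that vanishes at 0.\<close>

lemma quadratic_growth_real: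
  fixes g g' g'' :: "real \<Rightarrow> real"
  assumes d1: "\<And>t. (g has_real_derivative g' t) (at t)"
    and d2: "\<And>t. (g' has_real_derivative g'' t) (at t)"
    and c: "\<And>t. c \<le> g'' t"
    and g0: "g' 0 = 0"
  shows "g 0 + c / 2 \<le> g 1"
proof -
  define h where "h t = g t - c / 2 * t\<^sup>2" for t
  define h' where "h' t = g' t - c * t" for t
  have dh: "(h has_real_derivative h' t) (at t)" for t
    unfolding h_def h'_def by (rule derivative_eq_intros d1 refl | simp)+
  have dh': "(h' has_real_derivative (g'' t - c)) (at t)" for t
    unfolding h'_def by (rule derivative_eq_intros d2 refl | simp)+
  have h'_nonneg: "0 \<le> h' x" if "0 \<le> x" for x
    using DERIV_nonneg_imp_nondecreasing[OF that] dh' c g0 unfolding h'_def by force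
  have "h 0 \<le> h 1"
    by (rule DERIV_nonneg_imp_nondecreasing) (use dh h'_nonneg in force)+
  then show ?thesis unfolding h_def by simp
qed

lemma quadratic_growth_at_minimum:
  fixes \<phi> :: "real^'n^'m \<Rightarrow> real"
  assumes tw: "twice_differentiable \<phi>"
    and hess_bound: "\<And>t. c \<le> hess \<phi> (M + t *\<^sub>R E) E \<bullet> E"
    and min: "\<And>N. \<phi> M \<le> \<phi> N"
  shows "\<phi> M + c / 2 \<le> \<phi> (M + E)"
proof -
  define g where "g t = \<phi> (M + t *\<^sub>R E)" for t
  define g' where "g' t = E \<bullet> grad \<phi> (M + t *\<^sub>R E)" for t
  have d1: "(g has_real_derivative g' t) (at t)" for t
    unfolding g_def g'_def
    by (rule has_real_derivative_along_line) (use tw twice_differentiable_def in blast)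
  have d2: "(g' has_real_derivative (hess \<phi> (M + t *\<^sub>R E) E \<bullet> E)) (at t)" for t
    unfolding g'_def
    by (rule has_real_derivative_grad_along_line) (use tw twice_differentiable_def in blast)
  have "g' 0 = 0"
    by (rule DERIV_local_min[OF d1[of 0], of 1]) (auto simp: g_def min)
  from quadratic_growth_real[OF d1 d2 hess_bound this] show ?thesis unfolding g_def by simp
qed

lemma rank_add_le:
  fixes A B :: "real^'n^'m"
  shows "rank (A + B) \<le> rank A + rank B"
proof -
  let ?RA = "range (\<lambda>x. A *v x)" and ?RB = "range (\<lambda>x. B *v x)"
  have sub: "subspace (range (\<lambda>x. C *v x))" for C :: "real^'n^'m"
    by (rule linear_subspace_image[OF matrix_vector_mul_linear subspace_UNIV])
  have "range (\<lambda>x. (A + B) *v x) \<subseteq> {x + y |x y. x \<in> ?RA \<and> y \<in> ?RB}"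
    by (auto simp: matrix_vector_mult_add_rdistrib)
  then have "rank (A + B) \<le> dim {x + y |x y. x \<in> ?RA \<and> y \<in> ?RB}"
    unfolding rank_dim_range by (rule dim_subset)
  also have "\<dots> \<le> dim ?RA + dim ?RB"
    using dim_sums_Int[OF sub[of A] sub[of B]] by linarith
  finally show ?thesis by (simp add: rank_dim_range)
qed

lemma rank_scaleR_le:
  fixes A :: "real^'n^'m"
  shows "rank (c *\<^sub>R A) \<le> rank A"
proof -
  have "range (\<lambda>x. (c *\<^sub>R A) *v x) \<subseteq> range (\<lambda>x. A *v x)"
    by (auto simp flip: scaleR_matrix_vector_assoc matrix_vector_mult_scaleR)
  then show ?thesis unfolding rank_dim_range by (rule dim_subset)
qed

lemma rank_lincomb_le:
  fixes A B :: "real^'n^'m"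
  shows "rank (a *\<^sub>R A + b *\<^sub>R B) \<le> rank A + rank B"
  using rank_add_le[of "a *\<^sub>R A" "b *\<^sub>R B"] rank_scaleR_le[of a A] rank_scaleR_le[of b B]
  by linarith

lemma rank_mult_transpose_le:
  fixes X :: "real^'r^'n"
  shows "rank (X ** transpose X) \<le> CARD('r)"
  using rank_mul_le_right[of X "transpose X"] rank_bound[of "transpose X"] by linarith

lemma restricted_strongly_convex_quadratic_growth:
  fixes \<phi> :: "real^'n^'m \<Rightarrow> real"
  assumes tw: "twice_differentiable \<phi>" and rsc: "restricted_strongly_convex \<mu> (2 * r) \<phi>"
    and min: "\<forall>N. \<phi> M \<le> \<phi> N"
    and "rank M \<le> r" "rank M' \<le> r"
  shows "\<phi> M + \<mu> / 2 * (norm (M' - M))\<^sup>2 \<le> \<phi> M'"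
proof -
  define E where "E = M' - M"
  have "rank E \<le> 2 * r"
    using rank_lincomb_le[of 1 M' "-1" M] assms(4,5) unfolding E_def by simp
  moreover have "rank (M + t *\<^sub>R E) \<le> 2 * r" for t
  proof -
    have "M + t *\<^sub>R E = (1 - t) *\<^sub>R M + t *\<^sub>R M'" unfolding E_def by (simp add: algebra_simps)
    then show ?thesis using rank_lincomb_le[of "1 - t" M t M'] assms(4,5) by simp
  qed
  ultimately have "\<mu> * (norm E)\<^sup>2 \<le> hess \<phi> (M + t *\<^sub>R E) E \<bullet> E" for t
    using rsc unfolding restricted_strongly_convex_def by blast
  from quadratic_growth_at_minimum[OF tw this] min
  have "\<phi> M + \<mu> * (norm E)\<^sup>2 / 2 \<le> \<phi> (M + E)" by blast
  then show ?thesis unfolding E_def by simp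
qed

section \<open>Low-rank factorisation of positive semidefinite matrices\<close>

lemma columns_mult_transpose_vector:
  fixes c :: "'r::finite \<Rightarrow> real^'n"
  defines "Y \<equiv> \<chi> a j. c j $ a"
  shows "(Y ** transpose Y) *v x = (\<Sum>j\<in>UNIV. (c j \<bullet> x) *\<^sub>R c j)"
proof -
  have "transpose Y *v x = (\<chi> j. c j \<bullet> x)"
    unfolding Y_def
    by (simp add: vec_eq_iff matrix_vector_mult_def transpose_def inner_vec_def mult.commute)
  moreover have "Y *v y = (\<Sum>j\<in>UNIV. (y $ j) *\<^sub>R c j)" for y
    unfolding Y_def by (simp add: vec_eq_iff matrix_vector_mult_def sum_component mult.commute)
  ultimately show ?thesis by (simp flip: matrix_vector_mul_assoc)
qed

text \<open>Put the vectors sqrt(d i) u i for the at most r nonzero eigenvalues d i into distinct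
columns of Y.\<close>

lemma psd_low_rank_factorization:
  fixes M :: "real^'n^'n"
  assumes psd: "psd M" and rk: "rank M \<le> CARD('r)"
  obtains Y :: "real^'r^'n" where "Y ** transpose Y = M"
proof -
  obtain u d where "orthonormal_basis u" and ev: "\<And>i. M *v u i = d i *\<^sub>R u i"
    using symmetric_orthonormal_eigenbasis psd psd_def by metis
  interpret orthonormal_basis u by fact
  define I where "I = {i. d i \<noteq> 0}"
  have "card I \<le> CARD('r)" using card_nonzero_eigenvalues_le_rank[OF ev] rk unfolding I_def by linarith
  then obtain g :: "'n \<Rightarrow> 'r" where g: "inj_on g I"
    using card_le_inj[OF finite finite, of I "UNIV :: 'r set"] by auto
  define c where
    "c j = (if j \<in> g ` I then sqrt (d (inv_into I g j)) *\<^sub>R u (inv_into I g j) else 0)" for j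
  have cg: "c (g i) = sqrt (d i) *\<^sub>R u i" if "i \<in> I" for i
    using g that by (simp add: c_def)
  have "(\<Sum>j\<in>UNIV. (c j \<bullet> x) *\<^sub>R c j) = M *v x" for x
  proof -
    have "(\<Sum>j\<in>UNIV. (c j \<bullet> x) *\<^sub>R c j) = (\<Sum>j\<in>g ` I. (c j \<bullet> x) *\<^sub>R c j)"
      by (rule sum.mono_neutral_right) (auto simp: c_def)
    also have "\<dots> = (\<Sum>i\<in>I. (c (g i) \<bullet> x) *\<^sub>R c (g i))"
      by (rule sum.reindex[OF g, unfolded o_def])
    also have "\<dots> = (\<Sum>i\<in>I. (d i * (u i \<bullet> x)) *\<^sub>R u i)"
    proof (rule sum.cong[OF refl])
      fix i assume "i \<in> I"
      have "sqrt (d i) * sqrt (d i) = d i" using psd_eigenvalue_nonneg[OF psd ev] by simp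
      then show "(c (g i) \<bullet> x) *\<^sub>R c (g i) = (d i * (u i \<bullet> x)) *\<^sub>R u i"
        using cg[OF \<open>i \<in> I\<close>] by (simp add: ac_simps)
    qed
    also have "\<dots> = (\<Sum>i\<in>UNIV. (d i * (u i \<bullet> x)) *\<^sub>R u i)"
      by (rule sum.mono_neutral_left) (auto simp: I_def)
    also have "\<dots> = M *v x" by (rule matrix_vector_expansion[OF ev, symmetric])
    finally show ?thesis .
  qed
  then have "(\<chi> a j. c j $ a) ** transpose (\<chi> a j. c j $ a) = M"
    by (simp add: columns_mult_transpose_vector matrix_eq)
  then show thesis by (rule that)
qed

theorem lemma26:
  fixes \<phi> :: "real^'n^'n \<Rightarrow> real"
    and L \<mu> :: real
    and Mstar :: "real^'n^'n"
    and Xstar X :: "real^'r^'n"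
  defines "f \<equiv> (\<lambda>Y :: real^'r^'n. \<phi> (Y ** transpose Y))"
  assumes twice: "twice_differentiable \<phi>"
    and lip: "gradient_lipschitz L \<phi>"
    and rsc: "restricted_strongly_convex \<mu> (2 * CARD('r)) \<phi>"
    and mu_pos: "0 < \<mu>"
    and Mstar_min: "\<forall>M. \<phi> Mstar \<le> \<phi> M"
    and Mstar_psd: "psd Mstar"
    and rank_le: "rank Mstar \<le> CARD('r)"
    and Xstar_min: "\<forall>Y. f Xstar \<le> f Y"
    and close: "f X - f Xstar \<le> \<mu> / (2 * (1 + L / \<mu>)) * (eigval Mstar (rank Mstar))\<^sup>2"
  shows "eigval (X ** transpose X) (rank Mstar)
           \<ge> (sqrt (1 + L / \<mu>) - 1) * norm (X ** transpose X - Mstar)"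
proof -
  let ?A = "X ** transpose X" and ?k = "rank Mstar"
  let ?D = "norm (?A - Mstar)" and ?lam = "eigval Mstar ?k"
  define \<kappa> where "\<kappa> = 1 + L / \<mu>"
  have \<kappa>_pos: "0 < \<kappa>"
    using gradient_lipschitz_nonneg[OF lip] mu_pos unfolding \<kappa>_def by (simp add: add_pos_nonneg)
  have k_le: "?k \<le> CARD('n)" using rank_bound[of Mstar] by simp
  obtain Y :: "real^'r^'n" where "Y ** transpose Y = Mstar"
    using psd_low_rank_factorization[OF Mstar_psd rank_le] .
  then have "f Xstar \<le> \<phi> Mstar" using Xstar_min unfolding f_def by metis
  moreover have "\<phi> Mstar + \<mu> / 2 * ?D\<^sup>2 \<le> f X"
    unfolding f_def by (rule restricted_strongly_convex_quadratic_growth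
        [OF twice rsc Mstar_min rank_le rank_mult_transpose_le])
  ultimately have "\<mu> / 2 * ?D\<^sup>2 \<le> \<mu> / (2 * \<kappa>) * ?lam\<^sup>2"
    using close unfolding \<kappa>_def by linarith
  then have "(sqrt \<kappa> * ?D)\<^sup>2 \<le> ?lam\<^sup>2"
    using mu_pos \<kappa>_pos by (simp add: power_mult_distrib field_simps)
  then have "sqrt \<kappa> * ?D \<le> ?lam"
    by (rule power2_le_imp_le) (rule eigval_psd_nonneg[OF Mstar_psd k_le])
  moreover have "?lam - ?D \<le> eigval ?A ?k"
    using eigval_weyl[OF _ _ k_le] Mstar_psd unfolding psd_def by (simp add: matrix_transpose_mul)
  ultimately show ?thesis unfolding \<kappa>_def by (simp add: algebra_simps)
qed

end
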